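(* Let a WIFS satisfy the $\Phi$-FNC for an iteration rule $\Phi$. Then the map $\pi:\Omega^\infty\to K$ is Lipschitz with constant $1$ with respect to the metric $d$ on $\Omega^\infty$.
   Context: Setting. A weighted iterated function system (WIFS) $(S_i,p_i)_{i\in\mathcal I}$ consists of a finite index set $\mathcal I$, maps $S_i(x)=r_ix+d_i$ on $\mathbb R$ with $0<|r_i|<1$, and probabilities $p_i>0$ with $\sum_i p_i=1$. Its self-similar set $K$ is the unique nonempty compact set with $K=\bigcup_i S_i(K)$. Standing assumptions: $K$ is not a singleton and its convex hull is $[0,1]$. For a finite word $\sigma=\sigma_1\cdots\sigma_n$ over $\mathcal I$ (the set of all finite words, including the empty word, is $\mathcal I^*$) put $S_\sigma=S_{\sigma_1}\circ\cdots\circ S_{\sigma_n}$. Iteration rules and net intervals. Fix a total order on the affine bijections $x\mapsto ax+b$ ($a\ne0$) of $\mathbb R$. For a closed interval $J$ let $T_J(x)=rx+c$ ($r>0$) be the map with $T_J([0,1])=J$. An iteration rule $\Phi$ assigns to each finite strictly increasing tuple $v=(f_1,\dots,f_m)$ of such maps a tuple $\Phi(v)=(\mathcal C_1,\dots,\mathcal C_m)$ of finite subsets of $\mathcal I^*$ such that for each $i$ and all large $n$ every word of length $n$ has a unique prefix in $\mathcal C_i$. Children of a pair $(\Delta,v)$, $\Delta=[a,b]$: let $\mathcal Y=\{T_\Delta\circ f_i\circ S_\tau:1\le i\le m,\tau\in\mathcal C_i\}$ and list $\{a,b\}\cup\{g(z):g\in\mathcal Y,z\in\{0,1\},g(z)\in\Delta\}$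 as $a=y_1<\dots<y_{k+1}=b$; the children are the pairs $(\Delta',v')$ with $\Delta'=[y_j,y_{j+1}]$, $(y_j,y_{j+1})\cap K\ne\emptyset$, and $v'$ the increasing tuple of the distinct maps $T_{\Delta'}^{-1}\circ g$, $g\in\mathcal Y$, $g(K)\cap(y_j,y_{j+1})\ne\emptyset$. Let $\mathcal N_0=\{([0,1],(\mathrm{id}))\}$ and $\mathcal N_{n+1}$ the set of children of members of $\mathcal N_n$; for $(\Delta,v)\in\mathcal N_n$, $\Delta$ is a net interval of level $n$ with neighbour set $v$. $\Phi$ must also satisfy: (i) $\max\{r\,\mathrm{diam}\Delta:(\Delta,v)\in\mathcal N_n,(x\mapsto rx+c)\in v\}\to0$; (ii) if $f_1\neq f_2$ lie in a neighbour set then $f_1\circ S_\sigma\ne f_2$ for all $\sigma\in\mathcal I^*$. (Convention: a pair whose only child has the same interval is replaced by that child.) Transition graph. Children, their neighbour sets, relative positions and diameter ratios depend only on $v$. The transition graph $\mathcal G$ has as vertices the neighbour sets occurring, root $v_{\mathrm{root}}=(\mathrm{id})$, and one edge $e$ from $v$ to $v'$ for each child $(\Delta',v')$ of a pair $(\Delta,v)$ (distinguished by the relative position of $\Delta'$ in $\Delta$), with weight $W(e)=\mathrm{diam}\Delta'/\mathrm{diam}\Delta$; for a path $\eta=(e_1,\dots,e_n)$, $W(\eta)=\prod W(e_k)$. $\Omega^n,\Omega^\infty$ are the paths starting at $v_{\mathrm{root}}$ of length $n$, resp. infinite. Each $\eta\in\Omega^n$ corresponds bijectively to a net interval $\pi(\eta)$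 of level $n$ (following children), with $W(\eta)=\mathrm{diam}\,\pi(\eta)$. For $\gamma\in\Omega^\infty$, $\gamma|n$ is its length-$n$ prefix and $\pi(\gamma)$ is the unique point of $\bigcap_n\pi(\gamma|n)$. The WIFS satisfies the $\Phi$-FNC if $\mathcal G$ is finite. The metric on $\Omega^\infty$ is $d(\gamma_1,\gamma_2)=\inf\{W(\eta):\eta$ a common prefix of $\gamma_1$ and $\gamma_2\}$. *)

theory Defs
  imports "HOL-Analysis.Analysis" "HOL-Library.Sublist"
begin

text \<open>An affine map x \<mapsto> a x + b is represented by the pair (a, b) (with a \<noteq> 0).\<close>
type_synonym aff = "real \<times> real"

definition aff_app :: "aff \<Rightarrow> real \<Rightarrow> real" where
  "aff_app f x = fst f * x + snd f"

definition aff_comp :: "aff \<Rightarrow> aff \<Rightarrow> aff" where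
  "aff_comp f g = (fst f * fst g, fst f * snd g + snd f)"

definition aff_inv :: "aff \<Rightarrow> aff" where
  "aff_inv f = (1 / fst f, - snd f / fst f)"

definition aff_id :: aff where
  "aff_id = (1, 0)"

text \<open>T_J for J = [a,b] (a < b): the increasing affine map with T_J([0,1]) = J.\<close>
definition T_int :: "real \<Rightarrow> real \<Rightarrow> aff" where
  "T_int a b = (b - a, a)"

definition S_word :: "('i \<Rightarrow> real) \<Rightarrow> ('i \<Rightarrow> real) \<Rightarrow> 'i list \<Rightarrow> aff" where
  "S_word r d \<sigma> = foldr (\<lambda>i f. aff_comp (r i, d i) f) \<sigma> aff_id"

definition wifs :: "'i set \<Rightarrow> ('i \<Rightarrow> real) \<Rightarrow> ('i \<Rightarrow> real) \<Rightarrow> ('i \<Rightarrow> real) \<Rightarrow> bool" where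
  "wifs I r d p \<longleftrightarrow> finite I \<and> (\<forall>i\<in>I. 0 < \<bar>r i\<bar> \<and> \<bar>r i\<bar> < 1 \<and> 0 < p i) \<and> (\<Sum>i\<in>I. p i) = 1"

definition self_similar_set :: "'i set \<Rightarrow> ('i \<Rightarrow> real) \<Rightarrow> ('i \<Rightarrow> real) \<Rightarrow> real set \<Rightarrow> bool" where
  "self_similar_set I r d K \<longleftrightarrow> compact K \<and> K \<noteq> {} \<and> K = (\<Union>i\<in>I. (\<lambda>x. r i * x + d i) ` K)"

text \<open>A pair (Delta, v): Delta = [a,b] encoded as (a,b); v the neighbour set (a finite set of
  affine maps; the increasing tuple w.r.t. the fixed total order is determined by the set).
  An iteration rule Phi assigns to each neighbour set v and each f in v the finite set of words
  C_f = Phi v f.\<close>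
type_synonym pair = "(real \<times> real) \<times> aff set"

definition net_root :: pair where
  "net_root = ((0, 1), {aff_id})"

definition Y_maps :: "('i \<Rightarrow> real) \<Rightarrow> ('i \<Rightarrow> real) \<Rightarrow> (aff set \<Rightarrow> aff \<Rightarrow> 'i list set) \<Rightarrow> pair \<Rightarrow> aff set" where
  "Y_maps r d \<Phi> P = {aff_comp (T_int (fst (fst P)) (snd (fst P))) (aff_comp f (S_word r d \<tau>)) | f \<tau>.
                        f \<in> snd P \<and> \<tau> \<in> \<Phi> (snd P) f}"

definition cut_points :: "('i \<Rightarrow> real) \<Rightarrow> ('i \<Rightarrow> real) \<Rightarrow> (aff set \<Rightarrow> aff \<Rightarrow> 'i list set) \<Rightarrow> pair \<Rightarrow> real set" where
  "cut_points r d \<Phi> P = {fst (fst P), snd (fst P)} \<union>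
     {aff_app g z | g z. g \<in> Y_maps r d \<Phi> P \<and> z \<in> {0, 1} \<and> aff_app g z \<in> {fst (fst P) .. snd (fst P)}}"

definition children :: "('i \<Rightarrow> real) \<Rightarrow> ('i \<Rightarrow> real) \<Rightarrow> real set \<Rightarrow> (aff set \<Rightarrow> aff \<Rightarrow> 'i list set) \<Rightarrow> pair \<Rightarrow> pair set" where
  "children r d K \<Phi> P = {((c, e), v') | c e v'.
      c \<in> cut_points r d \<Phi> P \<and> e \<in> cut_points r d \<Phi> P \<and> c < e \<and>
      {c<..<e} \<inter> cut_points r d \<Phi> P = {} \<and> {c<..<e} \<inter> K \<noteq> {} \<and>
      v' = {aff_comp (aff_inv (T_int c e)) g | g. g \<in> Y_maps r d \<Phi> P \<and> aff_app g ` K \<inter> {c<..<e} \<noteq> {}}}"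

text \<open>Convention: a pair whose only child has the same interval is replaced by that child
  (repeatedly). reduces P Q: Q is the result of this replacement applied to P.\<close>
definition trivial_step :: "('i \<Rightarrow> real) \<Rightarrow> ('i \<Rightarrow> real) \<Rightarrow> real set \<Rightarrow> (aff set \<Rightarrow> aff \<Rightarrow> 'i list set) \<Rightarrow> pair \<Rightarrow> pair \<Rightarrow> bool" where
  "trivial_step r d K \<Phi> P Q \<longleftrightarrow> children r d K \<Phi> P = {Q} \<and> fst Q = fst P"

definition reduces :: "('i \<Rightarrow> real) \<Rightarrow> ('i \<Rightarrow> real) \<Rightarrow> real set \<Rightarrow> (aff set \<Rightarrow> aff \<Rightarrow> 'i list set) \<Rightarrow> pair \<Rightarrow> pair \<Rightarrow> bool" where
  "reduces r d K \<Phi> P Q \<longleftrightarrow> (\<exists>(n::nat) s. s 0 = P \<and> s n = Q \<and>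
       (\<forall>j<n. trivial_step r d K \<Phi> (s j) (s (Suc j))) \<and> \<not> (\<exists>Q'. trivial_step r d K \<Phi> Q Q'))"

definition net_child :: "('i \<Rightarrow> real) \<Rightarrow> ('i \<Rightarrow> real) \<Rightarrow> real set \<Rightarrow> (aff set \<Rightarrow> aff \<Rightarrow> 'i list set) \<Rightarrow> pair \<Rightarrow> pair \<Rightarrow> bool" where
  "net_child r d K \<Phi> P Q \<longleftrightarrow> (\<exists>P'\<in>children r d K \<Phi> P. reduces r d K \<Phi> P' Q)"

primrec net :: "('i \<Rightarrow> real) \<Rightarrow> ('i \<Rightarrow> real) \<Rightarrow> real set \<Rightarrow> (aff set \<Rightarrow> aff \<Rightarrow> 'i list set) \<Rightarrow> nat \<Rightarrow> pair set" where
  "net r d K \<Phi> 0 = {net_root}"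
| "net r d K \<Phi> (Suc n) = {Q. \<exists>P\<in>net r d K \<Phi> n. net_child r d K \<Phi> P Q}"

definition iteration_rule :: "'i set \<Rightarrow> ('i \<Rightarrow> real) \<Rightarrow> ('i \<Rightarrow> real) \<Rightarrow> real set \<Rightarrow> (aff set \<Rightarrow> aff \<Rightarrow> 'i list set) \<Rightarrow> bool" where
  "iteration_rule I r d K \<Phi> \<longleftrightarrow>
     (\<forall>v. finite v \<and> (\<forall>f\<in>v. fst f \<noteq> 0) \<longrightarrow>
        (\<forall>f\<in>v. finite (\<Phi> v f) \<and> \<Phi> v f \<subseteq> lists I \<and>
           (\<exists>N. \<forall>n\<ge>N. \<forall>w\<in>lists I. length w = n \<longrightarrow> (\<exists>!u. u \<in> \<Phi> v f \<and> prefix u w)))) \<and>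
     \<comment> \<open>(i): max of |r| diam Delta over (Delta,v) in N_n, (x \<mapsto> r x + c) in v, tends to 0\<close>
     (\<forall>\<epsilon>>0. \<exists>N. \<forall>n\<ge>N. \<forall>P\<in>net r d K \<Phi> n. \<forall>f\<in>snd P.
          \<bar>fst f\<bar> * (snd (fst P) - fst (fst P)) < \<epsilon>) \<and>
     \<comment> \<open>(ii)\<close>
     (\<forall>n. \<forall>P\<in>net r d K \<Phi> n. \<forall>f1\<in>snd P. \<forall>f2\<in>snd P. f1 \<noteq> f2 \<longrightarrow>
          (\<forall>\<sigma>\<in>lists I. aff_comp f1 (S_word r d \<sigma>) \<noteq> f2))"

text \<open>Phi-FNC: the transition graph is finite, i.e. only finitely many neighbour sets occur.\<close>
definition phi_FNC :: "('i \<Rightarrow> real) \<Rightarrow> ('i \<Rightarrow> real) \<Rightarrow> real set \<Rightarrow> (aff set \<Rightarrow> aff \<Rightarrow> 'i list set) \<Rightarrow> bool" where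
  "phi_FNC r d K \<Phi> \<longleftrightarrow> finite {v. \<exists>n \<Delta>. (\<Delta>, v) \<in> net r d K \<Phi> n}"

text \<open>An infinite path from the root in the transition graph is identified with the sequence
  of pairs (pi(gamma|n), neighbour set) it visits: gamma n is the n-th net interval.\<close>
definition Omega_inf :: "('i \<Rightarrow> real) \<Rightarrow> ('i \<Rightarrow> real) \<Rightarrow> real set \<Rightarrow> (aff set \<Rightarrow> aff \<Rightarrow> 'i list set) \<Rightarrow> (nat \<Rightarrow> pair) set" where
  "Omega_inf r d K \<Phi> = {\<gamma>. \<gamma> 0 = net_root \<and> (\<forall>n. net_child r d K \<Phi> (\<gamma> n) (\<gamma> (Suc n)))}"

definition interval_of :: "pair \<Rightarrow> real set" where
  "interval_of P = {fst (fst P) .. snd (fst P)}"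

definition diam_of :: "pair \<Rightarrow> real" where
  "diam_of P = snd (fst P) - fst (fst P)"

definition proj_pi :: "(nat \<Rightarrow> pair) \<Rightarrow> real" where
  "proj_pi \<gamma> = (THE x. \<forall>n. x \<in> interval_of (\<gamma> n))"

text \<open>W(gamma|n) = diam(pi(gamma|n)); gamma|n is a common prefix iff the paths agree up to step n.\<close>
definition path_dist :: "(nat \<Rightarrow> pair) \<Rightarrow> (nat \<Rightarrow> pair) \<Rightarrow> real" where
  "path_dist \<gamma>1 \<gamma>2 = Inf {diam_of (\<gamma>1 n) | n. \<forall>k\<le>n. \<gamma>1 k = \<gamma>2 k}"

end

theory Submission
  imports Defs
begin

text \<open>
  If two paths share the prefix \<open>\<eta>\<close>, both projections lie in the net interval \<open>\<pi>(\<eta>)\<close>,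
  whose length is \<open>W(\<eta>)\<close>; so the whole point is that \<open>\<pi>\<close> is well defined, i.e. that the
  nested net intervals along a path shrink to a single point. This follows from condition (i)
  once every neighbour set is known to contain a map of slope at least 1 in modulus. That is
  inherited by children: a neighbour \<open>g\<close> whose image of \<open>K \<subseteq> [0,1]\<close> meets the interior of a
  child \<open>\<Delta>'\<close> has neither \<open>g(0)\<close> nor \<open>g(1)\<close> inside \<open>\<Delta>'\<close>, these being cut points, so
  \<open>g([0,1])\<close> covers \<open>\<Delta>'\<close> and the normalised neighbour \<open>T\<^sub>\<Delta>\<^sub>'\<inverse> \<circ> g\<close> has slope at
  least 1.
\<close>

lemma THE_mem_nested_closed:
  fixes S :: "nat \<Rightarrow> 'a::complete_space set"
  assumes "\<And>n. closed (S n)" "\<And>n. S n \<noteq> {}" "decseq S"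
    and "\<And>\<epsilon>. \<epsilon> > 0 \<Longrightarrow> \<exists>n. \<forall>x\<in>S n. \<forall>y\<in>S n. dist x y < \<epsilon>"
  shows "(THE x. \<forall>n. x \<in> S n) \<in> S m"
proof -
  obtain a where "\<Inter> (range S) = {a}"
    using decreasing_closed_nest_sing[of S] assms by (auto simp: decseq_def)
  then have "(THE x. \<forall>n. x \<in> S n) = a"
    by (intro the_equality) auto
  with \<open>\<Inter> (range S) = {a}\<close> show ?thesis
    by auto
qed

lemma aff_app_comp: "aff_app (aff_comp f g) x = aff_app f (aff_app g x)"
  by (simp add: aff_app_def aff_comp_def algebra_simps)

lemma fst_aff_comp [simp]: "fst (aff_comp f g) = fst f * fst g"
  by (simp add: aff_comp_def)

lemma aff_app_aff_inv: "fst f \<noteq> 0 \<Longrightarrow> aff_app f (aff_app (aff_inv f) x) = x"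
  by (simp add: aff_app_def aff_inv_def field_simps)

lemma fst_aff_inv_T_int: "fst (aff_inv (T_int c e)) = 1 / (e - c)"
  by (simp add: aff_inv_def T_int_def)

lemma affine_image_crossing_length:
  assumes "z \<in> {0..1}" "aff_app g z \<in> {c<..<e}"
    and "aff_app g 0 \<notin> {c<..<e}" "aff_app g 1 \<notin> {c<..<e}"
  shows "e - c \<le> \<bar>fst g\<bar>"
proof -
  define u v where "u = aff_app g 0" and "v = aff_app g 1"
  have gz: "aff_app g z = u + z * (v - u)" and slope: "fst g = v - u"
    by (simp_all add: u_def v_def aff_app_def algebra_simps)
  have "0 \<le> z" "z \<le> 1" using assms(1) by auto
  then have "\<bar>z * (v - u)\<bar> \<le> \<bar>v - u\<bar>" "0 \<le> z * (v - u) \<longleftrightarrow> u \<le> v \<or> z = 0"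
    by (auto simp: abs_mult mult_left_le_one_le zero_le_mult_iff)
  then have "min u v \<le> aff_app g z \<and> aff_app g z \<le> max u v"
    unfolding gz by (auto simp: min_def max_def abs_le_iff)
  then show ?thesis
    using assms(2-4) unfolding slope u_def[symmetric] v_def[symmetric]
    by (auto simp: min_def max_def split: if_splits)
qed

lemma S_word_Cons: "S_word r d (i # w) = aff_comp (r i, d i) (S_word r d w)"
  by (simp add: S_word_def)

lemma aff_app_S_word_Nil [simp]: "aff_app (S_word r d []) x = x"
  by (simp add: S_word_def aff_id_def aff_app_def)

lemma aff_app_S_word_Cons: "aff_app (S_word r d (i # w)) x = r i * aff_app (S_word r d w) x + d i"
  by (simp add: S_word_Cons aff_app_comp) (simp add: aff_app_def)

lemma aff_app_S_word_append:
  "aff_app (S_word r d (u @ w)) x = aff_app (S_word r d u) (aff_app (S_word r d w) x)"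
  by (induction u) (simp_all add: aff_app_S_word_Cons)

lemma fst_S_word_nonzero: "(\<And>i. i \<in> set w \<Longrightarrow> r i \<noteq> 0) \<Longrightarrow> fst (S_word r d w) \<noteq> 0"
  by (induction w) (simp_all add: S_word_Cons S_word_def aff_id_def)

lemma self_similar_set_S_word_image:
  assumes "self_similar_set I r d K" "w \<in> lists I" "y \<in> K"
  shows "aff_app (S_word r d w) y \<in> K"
  using assms(2)
proof (induction w)
  case (Cons i w)
  then have "r i * aff_app (S_word r d w) y + d i \<in> (\<Union>i\<in>I. (\<lambda>x. r i * x + d i) ` K)"
    by auto
  moreover have "K = (\<Union>i\<in>I. (\<lambda>x. r i * x + d i) ` K)"
    using assms(1) by (simp add: self_similar_set_def)
  ultimately show ?case
    by (metis aff_app_S_word_Cons)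
qed (simp add: assms(3))

lemma self_similar_set_S_word_cover:
  assumes "self_similar_set I r d K" "x \<in> K"
  shows "\<exists>w\<in>lists I. length w = n \<and> (\<exists>y\<in>K. x = aff_app (S_word r d w) y)"
proof (induction n)
  case 0
  show ?case using assms(2) by (intro bexI[of _ "[]"]) auto
next
  case (Suc n)
  then obtain w y where w: "w \<in> lists I" "length w = n" "y \<in> K" "x = aff_app (S_word r d w) y"
    by blast
  from assms(1) w(3) obtain i z where "i \<in> I" "z \<in> K" "y = r i * z + d i"
    unfolding self_similar_set_def by blast
  with w show ?case
    by (intro bexI[of _ "w @ [i]"]) (auto simp: aff_app_S_word_append aff_app_S_word_Cons)
qed

definition prefix_code :: "'i set \<Rightarrow> 'i list set \<Rightarrow> bool" where
  "prefix_code I C \<longleftrightarrow> finite C \<and> C \<subseteq> lists I \<and>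
     (\<exists>N. \<forall>n\<ge>N. \<forall>w\<in>lists I. length w = n \<longrightarrow> (\<exists>!u. u \<in> C \<and> prefix u w))"

lemma self_similar_set_prefix_code_cover:
  assumes "self_similar_set I r d K" "prefix_code I C" "x \<in> K"
  shows "\<exists>\<tau>\<in>C. \<exists>z\<in>K. x = aff_app (S_word r d \<tau>) z"
proof -
  obtain N where N: "\<forall>w\<in>lists I. length w = N \<longrightarrow> (\<exists>u. u \<in> C \<and> prefix u w)"
    using assms(2) unfolding prefix_code_def by blast
  obtain w y where w: "w \<in> lists I" "length w = N" "y \<in> K" "x = aff_app (S_word r d w) y"
    using self_similar_set_S_word_cover[OF assms(1,3)] by blast
  obtain u w' where "u \<in> C" "w = u @ w'"
    using N w by (auto simp: prefix_def)
  moreover have "aff_app (S_word r d w') y \<in> K"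
    using self_similar_set_S_word_image[OF assms(1)] w \<open>w = u @ w'\<close> by simp
  ultimately show ?thesis
    using w by (auto simp: aff_app_S_word_append)
qed

lemma iteration_rule_prefix_code:
  assumes "iteration_rule I r d K \<Phi>" "finite v" "\<forall>f\<in>v. fst f \<noteq> 0" "f \<in> v"
  shows "prefix_code I (\<Phi> v f)"
proof -
  have "\<forall>v. finite v \<and> (\<forall>f\<in>v. fst f \<noteq> 0) \<longrightarrow> (\<forall>f\<in>v. prefix_code I (\<Phi> v f))"
    using assms(1) unfolding iteration_rule_def prefix_code_def by (rule conjunct1)
  with assms(2-4) show ?thesis
    by blast
qed

lemma iteration_rule_neighbour_scale_small:
  assumes "iteration_rule I r d K \<Phi>" "\<epsilon> > 0"
  shows "\<exists>n. \<forall>P\<in>net r d K \<Phi> n. \<forall>f\<in>snd P. \<bar>fst f\<bar> * (snd (fst P) - fst (fst P)) < \<epsilon>"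
proof -
  have "\<forall>\<epsilon>>0. \<exists>N. \<forall>n\<ge>N. \<forall>P\<in>net r d K \<Phi> n. \<forall>f\<in>snd P. \<bar>fst f\<bar> * (snd (fst P) - fst (fst P)) < \<epsilon>"
    using conjunct1[OF conjunct2[OF assms(1)[unfolded iteration_rule_def]]] .
  with assms(2) show ?thesis
    by (meson order_refl)
qed

lemma Y_maps_eq_image:
  "Y_maps r d \<Phi> ((a, b), v) =
     (\<lambda>(f, \<tau>). aff_comp (T_int a b) (aff_comp f (S_word r d \<tau>))) ` (SIGMA f:v. \<Phi> v f)"
  unfolding Y_maps_def by auto

lemma finite_Y_maps:
  assumes "iteration_rule I r d K \<Phi>" "finite v" "\<forall>f\<in>v. fst f \<noteq> 0"
  shows "finite (Y_maps r d \<Phi> ((a, b), v))"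
  using iteration_rule_prefix_code[OF assms] assms(2)
  by (auto simp: Y_maps_eq_image prefix_code_def)

lemma Y_maps_slope_nonzero:
  assumes "iteration_rule I r d K \<Phi>" "\<forall>i\<in>I. r i \<noteq> 0"
    and "a < b" "finite v" "\<forall>f\<in>v. fst f \<noteq> 0"
    and "g \<in> Y_maps r d \<Phi> ((a, b), v)"
  shows "fst g \<noteq> 0"
proof -
  obtain f \<tau> where f: "f \<in> v" "\<tau> \<in> \<Phi> v f"
    and g: "g = aff_comp (T_int a b) (aff_comp f (S_word r d \<tau>))"
    using assms(6) by (auto simp: Y_maps_eq_image)
  have "\<tau> \<in> lists I"
    using iteration_rule_prefix_code[OF assms(1,4,5) f(1)] f(2) by (auto simp: prefix_code_def)
  then have "fst (S_word r d \<tau>) \<noteq> 0"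
    using assms(2) by (intro fst_S_word_nonzero) auto
  then show ?thesis
    using assms(3,5) f(1) by (simp add: g T_int_def)
qed

text \<open>The invariant carried along the net intervals of a path. Its last conjunct is what
  turns condition (i) into shrinking diameters.\<close>

fun admissible_pair :: "real set \<Rightarrow> pair \<Rightarrow> bool" where
  "admissible_pair K ((a, b), v) \<longleftrightarrow> a < b \<and> finite v \<and> (\<forall>f\<in>v. fst f \<noteq> 0) \<and>
     (\<forall>x\<in>K \<inter> {a<..<b}. \<exists>f\<in>v. \<exists>y\<in>K. x = aff_app (aff_comp (T_int a b) f) y) \<and>
     (\<exists>f\<in>v. 1 \<le> \<bar>fst f\<bar>)"

lemma admissible_net_root: "admissible_pair K net_root"
  by (auto simp: net_root_def aff_id_def aff_app_def aff_comp_def T_int_def)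

lemma Y_maps_cover:
  assumes "self_similar_set I r d K" "iteration_rule I r d K \<Phi>"
    and "admissible_pair K ((a, b), v)" "x \<in> K \<inter> {a<..<b}"
  shows "\<exists>g\<in>Y_maps r d \<Phi> ((a, b), v). \<exists>z\<in>K. x = aff_app g z"
proof -
  obtain f y where f: "f \<in> v" "y \<in> K" "x = aff_app (aff_comp (T_int a b) f) y"
    using assms(3,4) by (meson admissible_pair.simps)
  have "prefix_code I (\<Phi> v f)"
    using assms(3) f(1) by (intro iteration_rule_prefix_code[OF assms(2)]) auto
  then obtain \<tau> z where \<tau>: "\<tau> \<in> \<Phi> v f" "z \<in> K" "y = aff_app (S_word r d \<tau>) z"
    using self_similar_set_prefix_code_cover[OF assms(1) _ f(2)] by blast
  have "aff_comp (T_int a b) (aff_comp f (S_word r d \<tau>)) \<in> Y_maps r d \<Phi> ((a, b), v)"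
    unfolding Y_maps_def using f(1) \<tau>(1) by (simp only: fst_conv snd_conv mem_Collect_eq) blast
  moreover have "x = aff_app (aff_comp (T_int a b) (aff_comp f (S_word r d \<tau>))) z"
    using f(3) \<tau>(3) by (simp add: aff_app_comp)
  ultimately show ?thesis
    using \<tau>(2) by blast
qed

lemma cut_points_subset: "a \<le> b \<Longrightarrow> cut_points r d \<Phi> ((a, b), v) \<subseteq> {a..b}"
  by (auto simp: cut_points_def)

lemma Y_maps_endpoint_in_cut_points:
  assumes "g \<in> Y_maps r d \<Phi> ((a, b), v)" "t \<in> {0, 1}" "aff_app g t \<in> {a..b}"
  shows "aff_app g t \<in> cut_points r d \<Phi> ((a, b), v)"
  using assms unfolding cut_points_def fst_conv snd_conv by blast

lemma Y_maps_slope_ge_gap_length: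
  assumes "K \<subseteq> {0..1}" "a \<le> c" "e \<le> b" "{c<..<e} \<inter> cut_points r d \<Phi> ((a, b), v) = {}"
    and "g \<in> Y_maps r d \<Phi> ((a, b), v)" "z \<in> K" "aff_app g z \<in> {c<..<e}"
  shows "e - c \<le> \<bar>fst g\<bar>"
proof -
  have "aff_app g t \<notin> {c<..<e}" if "t \<in> {0, 1}" for t
  proof
    assume "aff_app g t \<in> {c<..<e}"
    with assms(2,3,5) that have "aff_app g t \<in> cut_points r d \<Phi> ((a, b), v)"
      by (intro Y_maps_endpoint_in_cut_points) auto
    with assms(4) \<open>aff_app g t \<in> {c<..<e}\<close> show False
      by blast
  qed
  then show ?thesis
    using assms(1,6,7) by (intro affine_image_crossing_length[of z]) auto
qed

lemma admissible_pair_normalised_neighbours: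
  assumes ce: "c < e" and "finite Y" and Y_slope: "\<forall>g\<in>Y. fst g \<noteq> 0"
    and cover: "\<forall>x\<in>K \<inter> {c<..<e}. \<exists>g\<in>Y. \<exists>z\<in>K. x = aff_app g z"
    and stretched: "\<exists>g\<in>Y. \<exists>z\<in>K. aff_app g z \<in> {c<..<e} \<and> e - c \<le> \<bar>fst g\<bar>"
    and v': "v' = {aff_comp (aff_inv (T_int c e)) g | g. g \<in> Y \<and> aff_app g ` K \<inter> {c<..<e} \<noteq> {}}"
  shows "admissible_pair K ((c, e), v')"
proof -
  define h where "h g = aff_comp (aff_inv (T_int c e)) g" for g
  have fst_h: "fst (h g) = fst g / (e - c)" for g
    by (simp add: h_def fst_aff_inv_T_int)
  have h_mem: "h g \<in> v'" if "g \<in> Y" "z \<in> K" "aff_app g z \<in> {c<..<e}" for g z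
    unfolding v' h_def using that by blast
  have "v' \<subseteq> h ` Y"
    by (auto simp: v' h_def)
  then have "finite v'"
    using \<open>finite Y\<close> by (auto intro: finite_subset)
  moreover have "\<forall>f\<in>h ` Y. fst f \<noteq> 0"
    using Y_slope ce by (simp add: fst_h)
  with \<open>v' \<subseteq> h ` Y\<close> have "\<forall>f\<in>v'. fst f \<noteq> 0"
    by blast
  moreover have "\<forall>x\<in>K \<inter> {c<..<e}. \<exists>f\<in>v'. \<exists>y\<in>K. x = aff_app (aff_comp (T_int c e) f) y"
  proof
    fix x assume x: "x \<in> K \<inter> {c<..<e}"
    then obtain g z where g: "g \<in> Y" "z \<in> K" "x = aff_app g z"
      using cover by blast
    with x have "h g \<in> v'"
      by (intro h_mem) auto
    moreover have "x = aff_app (aff_comp (T_int c e) (h g)) z"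
      using ce g(3) by (simp add: h_def aff_app_comp aff_app_aff_inv T_int_def)
    ultimately show "\<exists>f\<in>v'. \<exists>y\<in>K. x = aff_app (aff_comp (T_int c e) f) y"
      using g(2) by blast
  qed
  moreover have "\<exists>f\<in>v'. 1 \<le> \<bar>fst f\<bar>"
  proof -
    obtain g z where g: "g \<in> Y" "z \<in> K" "aff_app g z \<in> {c<..<e}" "e - c \<le> \<bar>fst g\<bar>"
      using stretched by blast
    with ce have "1 \<le> \<bar>fst (h g)\<bar>"
      by (simp add: fst_h abs_divide)
    with g h_mem show ?thesis
      by blast
  qed
  ultimately show ?thesis
    using ce by simp
qed

lemma children_admissible:
  assumes ss: "self_similar_set I r d K" and K01: "K \<subseteq> {0..1}"
    and ir: "iteration_rule I r d K \<Phi>" and rI: "\<forall>i\<in>I. r i \<noteq> 0"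
    and adm: "admissible_pair K ((a, b), v)"
    and child: "((c, e), v') \<in> children r d K \<Phi> ((a, b), v)"
  shows "admissible_pair K ((c, e), v') \<and> {c..e} \<subseteq> {a..b}"
proof -
  define Y where "Y = Y_maps r d \<Phi> ((a, b), v)"
  define CP where "CP = cut_points r d \<Phi> ((a, b), v)"
  have ce: "c < e" and gap: "{c<..<e} \<inter> CP = {}" and Kce: "{c<..<e} \<inter> K \<noteq> {}"
    and v': "v' = {aff_comp (aff_inv (T_int c e)) g | g. g \<in> Y \<and> aff_app g ` K \<inter> {c<..<e} \<noteq> {}}"
    and "c \<in> CP" "e \<in> CP"
    using child unfolding children_def Y_def CP_def by auto
  moreover have "CP \<subseteq> {a..b}"
    using adm by (auto simp: CP_def intro!: cut_points_subset)
  ultimately have sub: "a \<le> c" "e \<le> b"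
    by auto
  have "a < b" "finite v" "\<forall>f\<in>v. fst f \<noteq> 0"
    using adm by auto
  have cover: "\<forall>x\<in>K \<inter> {c<..<e}. \<exists>g\<in>Y. \<exists>z\<in>K. x = aff_app g z"
    using Y_maps_cover[OF ss ir adm] sub by (auto simp: Y_def)
  have "\<exists>g\<in>Y. \<exists>z\<in>K. aff_app g z \<in> {c<..<e} \<and> e - c \<le> \<bar>fst g\<bar>"
  proof -
    obtain x where "x \<in> K \<inter> {c<..<e}"
      using Kce by blast
    with cover obtain g z where "g \<in> Y" "z \<in> K" "aff_app g z \<in> {c<..<e}"
      by force
    moreover from this have "e - c \<le> \<bar>fst g\<bar>"
      using Y_maps_slope_ge_gap_length[OF K01 sub gap[unfolded CP_def]] by (simp add: Y_def)
    ultimately show ?thesis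
      by blast
  qed
  with ce cover v' finite_Y_maps[OF ir \<open>finite v\<close> \<open>\<forall>f\<in>v. fst f \<noteq> 0\<close>]
    Y_maps_slope_nonzero[OF ir rI \<open>a < b\<close> \<open>finite v\<close> \<open>\<forall>f\<in>v. fst f \<noteq> 0\<close>]
  have "admissible_pair K ((c, e), v')"
    by (intro admissible_pair_normalised_neighbours) (auto simp: Y_def)
  with sub show ?thesis
    by simp
qed

lemma net_child_admissible:
  assumes ss: "self_similar_set I r d K" and K01: "K \<subseteq> {0..1}"
    and ir: "iteration_rule I r d K \<Phi>" and rI: "\<forall>i\<in>I. r i \<noteq> 0"
    and adm: "admissible_pair K P" and child: "net_child r d K \<Phi> P Q"
  shows "admissible_pair K Q \<and> interval_of Q \<subseteq> interval_of P"
proof -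
  have step: "admissible_pair K Q' \<and> interval_of Q' \<subseteq> interval_of P'"
    if "admissible_pair K P'" "Q' \<in> children r d K \<Phi> P'" for P' Q'
    using children_admissible[OF ss K01 ir rI, of "fst (fst P')" "snd (fst P')" "snd P'"
        "fst (fst Q')" "snd (fst Q')" "snd Q'"] that
    by (simp add: interval_of_def)
  obtain n s where s: "s 0 \<in> children r d K \<Phi> P" "s n = Q"
    and trivial: "\<forall>j<n. trivial_step r d K \<Phi> (s j) (s (Suc j))"
    using child unfolding net_child_def reduces_def by blast
  have "admissible_pair K (s j) \<and> interval_of (s j) \<subseteq> interval_of P" if "j \<le> n" for j
    using that
  proof (induction j)
    case 0
    show ?case using step[OF adm s(1)] .
  next
    case (Suc j)
    then have "admissible_pair K (s j) \<and> interval_of (s j) \<subseteq> interval_of P"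
      by simp
    moreover have "s (Suc j) \<in> children r d K \<Phi> (s j)"
      using trivial Suc.prems by (simp add: trivial_step_def)
    ultimately show ?case
      using step[of "s j" "s (Suc j)"] by blast
  qed
  with s(2) show ?thesis
    by blast
qed

lemma Omega_inf_admissible:
  assumes "self_similar_set I r d K" "K \<subseteq> {0..1}" "iteration_rule I r d K \<Phi>" "\<forall>i\<in>I. r i \<noteq> 0"
    and \<gamma>: "\<gamma> \<in> Omega_inf r d K \<Phi>"
  shows "admissible_pair K (\<gamma> n) \<and> \<gamma> n \<in> net r d K \<Phi> n \<and>
    interval_of (\<gamma> (Suc n)) \<subseteq> interval_of (\<gamma> n)"
proof -
  have root: "\<gamma> 0 = net_root" and child: "\<And>n. net_child r d K \<Phi> (\<gamma> n) (\<gamma> (Suc n))"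
    using \<gamma> by (auto simp: Omega_inf_def)
  note step = net_child_admissible[OF assms(1-4) _ child]
  have "admissible_pair K (\<gamma> n) \<and> \<gamma> n \<in> net r d K \<Phi> n"
  proof (induction n)
    case 0
    show ?case by (simp add: root admissible_net_root)
  next
    case (Suc n)
    then show ?case
      using step[of n] child[of n] by auto
  qed
  with step show ?thesis
    by blast
qed

lemma Omega_inf_diam_small:
  assumes "self_similar_set I r d K" "K \<subseteq> {0..1}" "iteration_rule I r d K \<Phi>" "\<forall>i\<in>I. r i \<noteq> 0"
    and "\<gamma> \<in> Omega_inf r d K \<Phi>" "\<epsilon> > 0"
  shows "\<exists>n. diam_of (\<gamma> n) < \<epsilon>"
proof -
  obtain n where n: "\<forall>P\<in>net r d K \<Phi> n. \<forall>f\<in>snd P. \<bar>fst f\<bar> * (snd (fst P) - fst (fst P)) < \<epsilon>"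
    using iteration_rule_neighbour_scale_small[OF assms(3,6)] by blast
  obtain a b v where \<gamma>n: "\<gamma> n = ((a, b), v)"
    by (metis prod.collapse)
  then have "admissible_pair K ((a, b), v)" "((a, b), v) \<in> net r d K \<Phi> n"
    using Omega_inf_admissible[OF assms(1-5)] by metis+
  then obtain f where f: "f \<in> v" "1 \<le> \<bar>fst f\<bar>" and "a < b"
    by auto
  have "\<bar>fst f\<bar> * (b - a) < \<epsilon>"
    using n \<open>((a, b), v) \<in> net r d K \<Phi> n\<close> f(1) by fastforce
  moreover have "b - a \<le> \<bar>fst f\<bar> * (b - a)"
    using mult_right_mono[OF f(2), of "b - a"] \<open>a < b\<close> by simp
  ultimately have "b - a < \<epsilon>"
    by linarith
  with \<gamma>n have "diam_of (\<gamma> n) < \<epsilon>"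
    by (simp add: diam_of_def)
  then show ?thesis
    by blast
qed

lemma proj_pi_mem_interval_of:
  assumes "self_similar_set I r d K" "K \<subseteq> {0..1}" "iteration_rule I r d K \<Phi>" "\<forall>i\<in>I. r i \<noteq> 0"
    and "\<gamma> \<in> Omega_inf r d K \<Phi>"
  shows "proj_pi \<gamma> \<in> interval_of (\<gamma> n)"
  unfolding proj_pi_def
proof (rule THE_mem_nested_closed)
  note facts = Omega_inf_admissible[OF assms]
  show "closed (interval_of (\<gamma> m))" for m
    by (simp add: interval_of_def)
  show "interval_of (\<gamma> m) \<noteq> {}" for m
    using facts[of m] by (cases "\<gamma> m") (auto simp: interval_of_def)
  show "decseq (\<lambda>m. interval_of (\<gamma> m))"
    using facts by (intro decseq_SucI) blast
  show "\<exists>m. \<forall>x\<in>interval_of (\<gamma> m). \<forall>y\<in>interval_of (\<gamma> m). dist x y < \<epsilon>"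
    if "\<epsilon> > 0" for \<epsilon>
  proof -
    obtain m where "diam_of (\<gamma> m) < \<epsilon>"
      using Omega_inf_diam_small[OF assms \<open>\<epsilon> > 0\<close>] by blast
    then have "dist x y < \<epsilon>" if "x \<in> interval_of (\<gamma> m)" "y \<in> interval_of (\<gamma> m)" for x y
      using that by (auto simp: interval_of_def diam_of_def dist_real_def)
    then show ?thesis
      by blast
  qed
qed

lemma abs_proj_pi_diff_le_diam_of:
  assumes "self_similar_set I r d K" "K \<subseteq> {0..1}" "iteration_rule I r d K \<Phi>" "\<forall>i\<in>I. r i \<noteq> 0"
    and "\<gamma>1 \<in> Omega_inf r d K \<Phi>" "\<gamma>2 \<in> Omega_inf r d K \<Phi>" "\<gamma>1 n = \<gamma>2 n"
  shows "\<bar>proj_pi \<gamma>1 - proj_pi \<gamma>2\<bar> \<le> diam_of (\<gamma>1 n)"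
  using proj_pi_mem_interval_of[OF assms(1-5), of n] proj_pi_mem_interval_of[OF assms(1-4,6), of n] assms(7)
  by (auto simp: interval_of_def diam_of_def)

theorem lemma5p1:
  fixes I :: "'i set" and r d p :: "'i \<Rightarrow> real" and K :: "real set"
    and \<Phi> :: "aff set \<Rightarrow> aff \<Rightarrow> 'i list set"
  assumes "wifs I r d p"
    and "self_similar_set I r d K"
    and "\<not> (\<exists>x. K = {x})"
    and "convex hull K = {0..1}"
    and "iteration_rule I r d K \<Phi>"
    and "phi_FNC r d K \<Phi>"
  shows "\<forall>\<gamma>1\<in>Omega_inf r d K \<Phi>. \<forall>\<gamma>2\<in>Omega_inf r d K \<Phi>.
           \<bar>proj_pi \<gamma>1 - proj_pi \<gamma>2\<bar> \<le> 1 * path_dist \<gamma>1 \<gamma>2"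
proof (intro ballI)
  fix \<gamma>1 \<gamma>2
  assume \<gamma>: "\<gamma>1 \<in> Omega_inf r d K \<Phi>" "\<gamma>2 \<in> Omega_inf r d K \<Phi>"
  have K01: "K \<subseteq> {0..1}"
    using hull_subset[of K convex] assms(4) by simp
  have rI: "\<forall>i\<in>I. r i \<noteq> 0"
    using assms(1) by (auto simp: wifs_def)
  have "\<gamma>1 0 = \<gamma>2 0"
    using \<gamma> by (simp add: Omega_inf_def)
  then have "{diam_of (\<gamma>1 n) | n. \<forall>k\<le>n. \<gamma>1 k = \<gamma>2 k} \<noteq> {}"
    by auto
  then have "\<bar>proj_pi \<gamma>1 - proj_pi \<gamma>2\<bar> \<le> path_dist \<gamma>1 \<gamma>2"
    unfolding path_dist_def
    by (rule cInf_greatest) (auto intro: abs_proj_pi_diff_le_diam_of[OF assms(2) K01 assms(5) rI \<gamma>])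
  then show "\<bar>proj_pi \<gamma>1 - proj_pi \<gamma>2\<bar> \<le> 1 * path_dist \<gamma>1 \<gamma>2"
    by simp
qed

end
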